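(* Let $c_1,c_2>0$ be constants. For positive integers $n,m$, consider the distribution $\mu$ on $\Sigma^{[n]\times[m]}$ obtained by choosing a function $\ell\colon[m]\to[n]$ uniformly at random and setting $x_{i,j}=(0,\bot,\bot,\bot)$ if $i=\ell(j)$ and $x_{i,j}=(1,\bot,\bot,\bot)$ otherwise. Let $\mathcal A$ be a randomized decision tree (a probability distribution over deterministic decision trees querying cells of $[n]\times[m]$) such that for every deterministic tree in its support and every input $x$ in the support of $\mu$, the tree terminates on $x$ only after it has either found at least $c_1 m$ cells with value $0$ or queried at least $c_2 nm$ cells. Then the maximum over $x$ in the support of $\mu$ of the expected number of queries made by $\mathcal A$ on $x$ is $\Omega(nm)$, where the constant in $\Omega$ depends only on $c_1,c_2$.
   Context: $\Sigma$ is an alphabet whose symbols are quadruples $(\text{value},\text{pointer},\text{pointer},\text{pointer})$ with value in $\{0,1\}$ and pointers in a set containing the null pointer $\bot$; a cell has value $0$ if the first component of its symbol is $0$. A query asks for the symbol $x_c$ of one cell $c$. *)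

theory Defs
  imports "HOL-Probability.Probability"
begin

text \<open>Symbols: (value, pointer, pointer, pointer); the null pointer is None.\<close>
type_synonym 'p sym = "nat \<times> 'p option \<times> 'p option \<times> 'p option"
type_synonym cell = "nat \<times> nat"

datatype ('c, 's, 'o) dtree = Leaf 'o | Query 'c "'s \<Rightarrow> ('c, 's, 'o) dtree"

primrec qpath :: "('c, 's, 'o) dtree \<Rightarrow> ('c \<Rightarrow> 's) \<Rightarrow> 'c list" where
  "qpath (Leaf r) x = []"
| "qpath (Query c f) x = c # qpath (f (x c)) x"

text \<open>Inputs in the support of mu, cells indexed 0-based: [n] = {0..<n}, [m] = {0..<m}.\<close>
definition mu_input :: "nat \<Rightarrow> nat \<Rightarrow> (nat \<Rightarrow> nat) \<Rightarrow> cell \<Rightarrow> 'p sym" where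
  "mu_input n m l = (\<lambda>(i, j). if i < n \<and> j < m \<and> i = l j
      then (0, None, None, None) else (1, None, None, None))"

definition zeros_found :: "('c, 'p sym, 'o) dtree \<Rightarrow> ('c \<Rightarrow> 'p sym) \<Rightarrow> nat" where
  "zeros_found T x = card {c \<in> set (qpath T x). fst (x c) = 0}"

definition exp_queries :: "('c, 's, 'o) dtree pmf \<Rightarrow> ('c \<Rightarrow> 's) \<Rightarrow> ennreal" where
  "exp_queries A x = (\<integral>\<^sup>+ T. ennreal (real (length (qpath T x))) \<partial>measure_pmf A)"

end

theory Submission imports Defs begin

text \<open>
  Fix a deterministic tree \<open>T\<close>, a column \<open>j\<close> and the zero positions in all other columns.
  The inputs that differ only in the row \<open>a\<close> of the zero of column \<open>j\<close> agree, outside the cell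
  \<open>(a, j)\<close>, with the input whose column \<open>j\<close> has no zero, so \<open>T\<close> follows one and the same path
  on all of them until it queries \<open>(a, j)\<close>. Hence \<open>T\<close> finds the zero of column \<open>j\<close> with at most
  \<open>k\<close> queries to that column for at most \<open>k\<close> of the \<open>n\<close> rows \<open>a\<close>. Averaged over \<open>l\<close>, at most
  \<open>k m / n\<close> zeros are found this cheaply, and every other zero found costs more than \<open>k\<close> queries.
  With \<open>k \<approx> c\<^sub>1 n / 4\<close>, a tree that finds \<open>c\<^sub>1 m\<close> zeros on half of the inputs makes
  \<open>c\<^sub>1\<^sup>2 n m / 16\<close> queries on average; otherwise it queries \<open>c\<^sub>2 n m\<close> cells on half of
  the inputs. Averaging over the trees in the support of the randomized tree yields an input
  on which the expected number of queries is \<open>\<Omega>(n m)\<close>.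
\<close>

lemma takeWhile_qpath_eq:
  assumes "\<And>d. d \<noteq> c \<Longrightarrow> x d = y d"
  shows "takeWhile (\<lambda>d. d \<noteq> c) (qpath T x) = takeWhile (\<lambda>d. d \<noteq> c) (qpath T y)"
  by (induction T) (auto simp: assms)

lemma mem_qpath_iff:
  assumes "\<And>d. d \<noteq> c \<Longrightarrow> x d = y d"
  shows "c \<in> set (qpath T x) \<longleftrightarrow> c \<in> set (qpath T y)"
proof (induction T)
  case (Query d f)
  then show ?case by (cases "d = c") (simp_all add: assms)
qed simp

lemma takeWhile_neq_cases:
  "c \<in> set xs \<Longrightarrow> d \<in> set xs \<Longrightarrow> c \<noteq> d \<Longrightarrow>
   c \<in> set (takeWhile (\<lambda>e. e \<noteq> d) xs) \<or> d \<in> set (takeWhile (\<lambda>e. e \<noteq> c) xs)"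
  by (induction xs) auto

lemma set_takeWhile_neq_psubset:
  assumes "c \<in> set (takeWhile (\<lambda>e. e \<noteq> d) xs)"
  shows "set (takeWhile (\<lambda>e. e \<noteq> c) xs) \<subset> set (takeWhile (\<lambda>e. e \<noteq> d) xs)"
proof -
  have "set (takeWhile (\<lambda>e. e \<noteq> c) xs) \<subseteq> set (takeWhile (\<lambda>e. e \<noteq> d) xs)"
    using assms by (induction xs) auto
  moreover have "c \<notin> set (takeWhile (\<lambda>e. e \<noteq> c) xs)"
    by (auto dest: set_takeWhileD)
  ultimately show ?thesis using assms by blast
qed

lemma filter_takeWhile_neq:
  "P c \<Longrightarrow> filter P (takeWhile (\<lambda>e. e \<noteq> c) xs) = takeWhile (\<lambda>e. e \<noteq> c) (filter P xs)"
  by (induction xs) auto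

lemma psubset_takeWhile_neq_filter:
  assumes "c \<in> set xs" "P c"
  shows "{e \<in> set (takeWhile (\<lambda>e. e \<noteq> c) xs). P e} \<subset> {e \<in> set xs. P e}"
proof -
  have "c \<notin> set (takeWhile (\<lambda>e. e \<noteq> c) xs)"
    by (metis set_takeWhileD)
  with assms show ?thesis by (auto dest: set_takeWhileD)
qed

text \<open>The number of distinct elements preceding the first occurrence of \<open>c\<close> is injective in \<open>c\<close>.\<close>

lemma card_early_elements_le:
  "card {c \<in> set xs. card (set (takeWhile (\<lambda>e. e \<noteq> c) xs)) < k} \<le> k"
proof -
  define r where "r c = card (set (takeWhile (\<lambda>e. e \<noteq> c) xs))" for c
  have "r c < r d" if "c \<in> set (takeWhile (\<lambda>e. e \<noteq> d) xs)" for c d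
    unfolding r_def using set_takeWhile_neq_psubset[OF that] by (simp add: psubset_card_mono)
  then have "inj_on r (set xs)"
    by (intro inj_onI) (use takeWhile_neq_cases in fastforce)
  then have "card {c \<in> set xs. r c < k} = card (r ` {c \<in> set xs. r c < k})"
    by (simp add: card_image inj_on_subset)
  also have "\<dots> \<le> card {..<k}"
    by (rule card_mono) auto
  finally show ?thesis by (simp add: r_def)
qed

definition column_queries :: "(cell, 's, 'o) dtree \<Rightarrow> (cell \<Rightarrow> 's) \<Rightarrow> nat \<Rightarrow> nat" where
  "column_queries T x j = card {c \<in> set (qpath T x). snd c = j}"

definition cheaply_found :: "nat \<Rightarrow> (cell, 's, 'o) dtree \<Rightarrow> (cell \<Rightarrow> 's) \<Rightarrow> cell \<Rightarrow> bool" where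
  "cheaply_found k T x c \<longleftrightarrow> c \<in> set (qpath T x) \<and> column_queries T x (snd c) \<le> k"

text \<open>Row \<open>n\<close> lies outside \<open>[n]\<close>, so \<open>mu_input n m (l(j := n))\<close> has no zero in column \<open>j\<close>.\<close>

lemma mu_input_fun_upd_eq:
  assumes "d \<noteq> (a, j)"
  shows "mu_input n m (l(j := a)) d = mu_input n m (l(j := n)) d"
proof (cases d)
  case (Pair i j')
  with assms show ?thesis
    by (cases "j' = j") (auto simp: mu_input_def)
qed

lemma card_takeWhile_column_less:
  assumes agree: "\<And>d. d \<noteq> c \<Longrightarrow> x d = y d" and found: "c \<in> set (qpath T x)"
  shows "card (set (takeWhile (\<lambda>e. e \<noteq> c) (filter (\<lambda>e. snd e = snd c) (qpath T y))))
    < column_queries T x (snd c)"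
proof -
  have "takeWhile (\<lambda>e. e \<noteq> c) (filter (\<lambda>e. snd e = snd c) (qpath T y))
      = filter (\<lambda>e. snd e = snd c) (takeWhile (\<lambda>e. e \<noteq> c) (qpath T x))"
    using takeWhile_qpath_eq[of c x y T, OF agree] by (simp add: filter_takeWhile_neq)
  then have "set (takeWhile (\<lambda>e. e \<noteq> c) (filter (\<lambda>e. snd e = snd c) (qpath T y)))
      \<subset> {e \<in> set (qpath T x). snd e = snd c}"
    using psubset_takeWhile_neq_filter[OF found, of "\<lambda>e. snd e = snd c"] by simp
  then show ?thesis
    unfolding column_queries_def by (simp add: psubset_card_mono)
qed

lemma card_cheaply_found_column_le:
  fixes T :: "(cell, 'p sym, 'o) dtree"
  shows "card {a \<in> {..<n}. cheaply_found k T (mu_input n m (l(j := a))) (a, j)} \<le> k"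
proof -
  define P where "P = qpath T (mu_input n m (l(j := n)) :: cell \<Rightarrow> 'p sym)"
  define Q where "Q = filter (\<lambda>c. snd c = j) P"
  define S where "S = {a \<in> {..<n}. cheaply_found k T (mu_input n m (l(j := a))) (a, j)}"
  have "(a, j) \<in> {c \<in> set Q. card (set (takeWhile (\<lambda>e. e \<noteq> c) Q)) < k}" if "a \<in> S" for a
  proof -
    define x where "x = (mu_input n m (l(j := a)) :: cell \<Rightarrow> 'p sym)"
    have agree: "\<And>d. d \<noteq> (a, j) \<Longrightarrow> x d = mu_input n m (l(j := n)) d"
      unfolding x_def by (rule mu_input_fun_upd_eq)
    have found: "(a, j) \<in> set (qpath T x)" and budget: "column_queries T x j \<le> k"
      using \<open>a \<in> S\<close> by (simp_all add: S_def x_def cheaply_found_def)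
    have "(a, j) \<in> set Q"
      using found mem_qpath_iff[of "(a, j)" x "mu_input n m (l(j := n))" T] agree by (simp add: Q_def P_def)
    have "card (set (takeWhile (\<lambda>e. e \<noteq> (a, j)) Q)) < column_queries T x j"
      using card_takeWhile_column_less[of "(a, j)" x "mu_input n m (l(j := n))" T, OF agree found]
      by (simp add: Q_def P_def)
    with budget \<open>(a, j) \<in> set Q\<close> show ?thesis by simp
  qed
  then have "card ((\<lambda>a. (a, j)) ` S) \<le> card {c \<in> set Q. card (set (takeWhile (\<lambda>e. e \<noteq> c) Q)) < k}"
    by (intro card_mono) auto
  also have "\<dots> \<le> k"
    by (rule card_early_elements_le)
  finally show ?thesis
    by (simp add: S_def card_image inj_on_def)
qed

lemma zeros_found_mu_input:
  fixes T :: "(cell, 'p sym, 'o) dtree"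
  assumes "l \<in> {..<m} \<rightarrow>\<^sub>E {..<n}"
  shows "zeros_found T (mu_input n m l) = card {j \<in> {..<m}. (l j, j) \<in> set (qpath T (mu_input n m l))}"
proof -
  define P where "P = set (qpath T (mu_input n m l :: cell \<Rightarrow> 'p sym))"
  have "{c \<in> P. fst (mu_input n m l c :: 'p sym) = 0} = (\<lambda>j. (l j, j)) ` {j \<in> {..<m}. (l j, j) \<in> P}"
    using assms by (auto simp: mu_input_def PiE_def split: if_splits)
  moreover have "inj (\<lambda>j. (l j, j))"
    by (rule injI) simp
  ultimately show ?thesis
    unfolding zeros_found_def P_def by (simp add: card_image inj_on_subset)
qed

lemma card_PiE_filter_le:
  assumes "finite I" "finite B" "j \<in> I"
    and "\<And>g. card {a \<in> B. Q (g(j := a))} \<le> k"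
  shows "card {l \<in> I \<rightarrow>\<^sub>E B. Q l} \<le> k * card ((I - {j}) \<rightarrow>\<^sub>E B)"
proof -
  let ?G = "(I - {j}) \<rightarrow>\<^sub>E B"
  have "{l \<in> I \<rightarrow>\<^sub>E B. Q l} \<subseteq> (\<Union>g\<in>?G. (\<lambda>a. g(j := a)) ` {a \<in> B. Q (g(j := a))})"
  proof
    fix l assume "l \<in> {l \<in> I \<rightarrow>\<^sub>E B. Q l}"
    then have "l = (restrict l (I - {j}))(j := l j)" "restrict l (I - {j}) \<in> ?G" "l j \<in> B" "Q l"
      using \<open>j \<in> I\<close> by (auto simp: PiE_def extensional_def)
    then show "l \<in> (\<Union>g\<in>?G. (\<lambda>a. g(j := a)) ` {a \<in> B. Q (g(j := a))})"
      by (metis (mono_tags, lifting) UN_iff image_eqI mem_Collect_eq)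
  qed
  then have "card {l \<in> I \<rightarrow>\<^sub>E B. Q l} \<le> card (\<Union>g\<in>?G. (\<lambda>a. g(j := a)) ` {a \<in> B. Q (g(j := a))})"
    using assms(1,2) by (intro card_mono) (auto simp: finite_PiE)
  also have "\<dots> \<le> (\<Sum>g\<in>?G. card ((\<lambda>a. g(j := a)) ` {a \<in> B. Q (g(j := a))}))"
    by (rule card_UN_le) (use assms(1,2) in \<open>simp add: finite_PiE\<close>)
  also have "\<dots> \<le> (\<Sum>g\<in>?G. k)"
    by (intro sum_mono order_trans[OF card_image_le assms(4)]) (use assms(2) in simp)
  finally show ?thesis by (simp add: mult.commute)
qed

lemma card_expensive_columns_le:
  assumes "finite J"
  shows "Suc k * card {j \<in> J. k < column_queries T x j} \<le> length (qpath T x)"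
proof -
  let ?E = "{j \<in> J. k < column_queries T x j}"
  have "Suc k * card ?E = (\<Sum>j\<in>?E. Suc k)"
    by simp
  also have "\<dots> \<le> (\<Sum>j\<in>?E. column_queries T x j)"
    by (rule sum_mono) simp
  also have "\<dots> = card (\<Union>j\<in>?E. {c \<in> set (qpath T x). snd c = j})"
    unfolding column_queries_def by (rule card_UN_disjoint[symmetric]) (use assms in auto)
  also have "\<dots> \<le> card (set (qpath T x))"
    by (rule card_mono) auto
  also have "\<dots> \<le> length (qpath T x)"
    by (rule card_length)
  finally show ?thesis .
qed

lemma zeros_found_le_cheap_plus_expensive:
  fixes T :: "(cell, 'p sym, 'o) dtree"
  assumes "l \<in> {..<m} \<rightarrow>\<^sub>E {..<n}"
  shows "real (zeros_found T (mu_input n m l))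
    \<le> real (card {j \<in> {..<m}. cheaply_found k T (mu_input n m l) (l j, j)})
       + real (length (qpath T (mu_input n m l))) / (real k + 1)"
proof -
  let ?x = "mu_input n m l :: cell \<Rightarrow> 'p sym"
  let ?E = "{j \<in> {..<m}. k < column_queries T ?x j}"
  have "zeros_found T ?x \<le> card {j \<in> {..<m}. cheaply_found k T ?x (l j, j)} + card ?E"
    unfolding zeros_found_mu_input[OF assms]
    by (rule order_trans[OF card_mono card_Un_le]) (auto simp: cheaply_found_def)
  moreover have "(real k + 1) * real (card ?E) \<le> real (length (qpath T ?x))"
    using card_expensive_columns_le[of "{..<m}" k T ?x] by (simp add: add.commute flip: of_nat_mult of_nat_Suc)
  then have "real (card ?E) \<le> real (length (qpath T ?x)) / (real k + 1)"
    by (simp add: field_simps)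
  ultimately show ?thesis by linarith
qed

lemma sum_card_cheaply_found_le:
  fixes T :: "(cell, 'p sym, 'o) dtree"
  shows "(\<Sum>l\<in>{..<m} \<rightarrow>\<^sub>E {..<n}. card {j \<in> {..<m}. cheaply_found k T (mu_input n m l) (l j, j)})
    \<le> m * (k * n ^ (m - 1))"
proof -
  let ?L = "{..<m} \<rightarrow>\<^sub>E {..<n}"
  let ?C = "\<lambda>l j. cheaply_found k T (mu_input n m l) (l j, j)"
  have count: "card {x \<in> A. P x} = (\<Sum>x\<in>A. of_bool (P x) :: nat)" if "finite A" for A and P :: "'a \<Rightarrow> bool"
    using that by (simp add: Collect_conj_eq Int_commute)
  have "(\<Sum>l\<in>?L. card {j \<in> {..<m}. ?C l j}) = (\<Sum>l\<in>?L. \<Sum>j<m. of_bool (?C l j))"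
    by (intro sum.cong refl count) simp
  also have "\<dots> = (\<Sum>j<m. \<Sum>l\<in>?L. of_bool (?C l j))"
    by (rule sum.swap)
  also have "\<dots> = (\<Sum>j<m. card {l \<in> ?L. ?C l j})"
    by (intro sum.cong refl count[symmetric]) (simp add: finite_PiE)
  also have "\<dots> \<le> (\<Sum>j<m. k * n ^ (m - 1))"
  proof (rule sum_mono)
    fix j assume "j \<in> {..<m}"
    then have "card {l \<in> ?L. ?C l j} \<le> k * card (({..<m} - {j}) \<rightarrow>\<^sub>E {..<n})"
      using card_cheaply_found_column_le[where T = T] by (intro card_PiE_filter_le) simp_all
    also have "\<dots> = k * n ^ (m - 1)"
      using \<open>j \<in> {..<m}\<close> by (simp add: card_PiE)
    finally show "card {l \<in> ?L. ?C l j} \<le> k * n ^ (m - 1)" .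
  qed
  finally show ?thesis by simp
qed

lemma sum_zeros_found_le:
  fixes T :: "(cell, 'p sym, 'o) dtree"
  shows "(\<Sum>l\<in>{..<m} \<rightarrow>\<^sub>E {..<n}. real (zeros_found T (mu_input n m l)))
    \<le> real m * real k * real n ^ (m - 1)
       + (\<Sum>l\<in>{..<m} \<rightarrow>\<^sub>E {..<n}. real (length (qpath T (mu_input n m l)))) / (real k + 1)"
proof -
  let ?L = "{..<m} \<rightarrow>\<^sub>E {..<n}"
  let ?cheap = "\<lambda>l. real (card {j \<in> {..<m}. cheaply_found k T (mu_input n m l) (l j, j)})"
  have "(\<Sum>l\<in>?L. real (zeros_found T (mu_input n m l)))
      \<le> (\<Sum>l\<in>?L. ?cheap l + real (length (qpath T (mu_input n m l))) / (real k + 1))"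
    by (intro sum_mono zeros_found_le_cheap_plus_expensive)
  also have "\<dots> = (\<Sum>l\<in>?L. ?cheap l)
      + (\<Sum>l\<in>?L. real (length (qpath T (mu_input n m l)))) / (real k + 1)"
    by (simp add: sum.distrib sum_divide_distrib)
  moreover have "(\<Sum>l\<in>?L. ?cheap l) \<le> real (m * (k * n ^ (m - 1)))"
    unfolding of_nat_sum[symmetric] by (intro of_nat_mono sum_card_cheaply_found_le)
  ultimately show ?thesis
    by simp
qed

lemma sum_zeros_found_le_fraction:
  fixes T :: "(cell, 'p sym, 'o) dtree" and c :: real
  assumes "c > 0" "n \<ge> 1"
  shows "(\<Sum>l\<in>{..<m} \<rightarrow>\<^sub>E {..<n}. real (zeros_found T (mu_input n m l)))
    \<le> real (card ({..<m} \<rightarrow>\<^sub>E {..<n})) / 4 * (c * real m)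
       + (\<Sum>l\<in>{..<m} \<rightarrow>\<^sub>E {..<n}. real (length (qpath T (mu_input n m l)))) / (c * real n / 4)"
proof -
  define k where "k = nat \<lfloor>c * real n / 4\<rfloor>"
  define S where "S = (\<Sum>l\<in>{..<m} \<rightarrow>\<^sub>E {..<n}. real (length (qpath T (mu_input n m l))))"
  have "real k \<le> c * real n / 4" and k_gt: "c * real n / 4 \<le> real k + 1"
    using \<open>c > 0\<close> by (simp_all add: k_def) linarith
  then have "real m * real k * real n ^ (m - 1) \<le> real m * (c * real n / 4) * real n ^ (m - 1)"
    by (intro mult_right_mono mult_left_mono) auto
  also have "\<dots> = real (card ({..<m} \<rightarrow>\<^sub>E {..<n})) / 4 * (c * real m)"
    using \<open>n \<ge> 1\<close> by (cases m) (simp_all add: card_PiE)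
  finally have "real m * real k * real n ^ (m - 1) \<le> real (card ({..<m} \<rightarrow>\<^sub>E {..<n})) / 4 * (c * real m)" .
  moreover have "S / (real k + 1) \<le> S / (c * real n / 4)"
    using k_gt \<open>c > 0\<close> \<open>n \<ge> 1\<close> by (intro divide_left_mono) (auto simp: S_def sum_nonneg)
  ultimately show ?thesis
    using sum_zeros_found_le[where T = T and k = k and m = m and n = n] unfolding S_def by linarith
qed

lemma sum_length_qpath_ge:
  fixes T :: "(cell, 'p sym, 'o) dtree" and c1 c2 :: real
  assumes "c1 > 0" "c2 > 0" "n \<ge> 1"
    and stops: "\<And>l. l \<in> {..<m} \<rightarrow>\<^sub>E {..<n} \<Longrightarrow>
      c1 * real m \<le> real (zeros_found T (mu_input n m l)) \<or>
      c2 * real n * real m \<le> real (card (set (qpath T (mu_input n m l))))"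
  shows "min (c2 / 2) (c1\<^sup>2 / 16) * real n * real m * real (card ({..<m} \<rightarrow>\<^sub>E {..<n}))
    \<le> (\<Sum>l\<in>{..<m} \<rightarrow>\<^sub>E {..<n}. real (length (qpath T (mu_input n m l))))"
proof -
  define L where "L = {..<m} \<rightarrow>\<^sub>E {..<n}"
  define N where "N = real (card L)"
  define len where "len l = real (length (qpath T (mu_input n m l)))" for l
  define zer where "zer l = real (zeros_found T (mu_input n m l))" for l
  define S where "S = (\<Sum>l\<in>L. len l)"
  define G where "G = {l \<in> L. c1 * real m \<le> zer l}"
  have "finite L" by (simp add: L_def finite_PiE)
  have zer_upper: "(\<Sum>l\<in>L. zer l) \<le> N / 4 * (c1 * real m) + S / (c1 * real n / 4)"
    using sum_zeros_found_le_fraction[where T = T, OF \<open>c1 > 0\<close> \<open>n \<ge> 1\<close>]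
    by (simp add: L_def N_def S_def zer_def len_def)
  have zer_lower: "real (card G) * (c1 * real m) \<le> (\<Sum>l\<in>L. zer l)"
  proof -
    have "real (card G) * (c1 * real m) \<le> (\<Sum>l\<in>G. zer l)"
      using sum_mono[of G "\<lambda>_. c1 * real m" zer] by (simp add: G_def)
    also have "\<dots> \<le> (\<Sum>l\<in>L. zer l)"
      by (rule sum_mono2[OF \<open>finite L\<close>]) (auto simp: G_def zer_def)
    finally show ?thesis .
  qed
  have len_lower: "real (card (L - G)) * (c2 * real n * real m) \<le> S"
  proof -
    have "c2 * real n * real m \<le> len l" if "l \<in> L - G" for l
      using stops[of l] that card_length[of "qpath T (mu_input n m l)"]
      by (force simp: G_def L_def zer_def len_def)
    then have "real (card (L - G)) * (c2 * real n * real m) \<le> (\<Sum>l\<in>L - G. len l)"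
      using sum_mono[of "L - G" "\<lambda>_. c2 * real n * real m" len] by simp
    also have "\<dots> \<le> S"
      unfolding S_def by (rule sum_mono2[OF \<open>finite L\<close>]) (auto simp: len_def)
    finally show ?thesis .
  qed
  have "real (card G) + real (card (L - G)) = N"
    using card_Diff_subset[of G L] card_mono[of L G] \<open>finite L\<close>
    by (simp add: N_def G_def finite_subset of_nat_diff)
  then consider "N / 2 \<le> real (card (L - G))" | "N / 2 \<le> real (card G)"
    by linarith
  then have "min (c2 / 2) (c1\<^sup>2 / 16) * real n * real m * N \<le> S"
  proof cases
    case 1
    have "min (c2 / 2) (c1\<^sup>2 / 16) * real n * real m * N \<le> c2 / 2 * real n * real m * N"
      by (intro mult_right_mono) (auto simp: N_def)
    also have "\<dots> = N / 2 * (c2 * real n * real m)"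
      by simp
    also have "\<dots> \<le> real (card (L - G)) * (c2 * real n * real m)"
      using 1 \<open>c2 > 0\<close> by (intro mult_right_mono) auto
    finally show ?thesis
      using len_lower by linarith
  next
    case 2
    have "N / 2 * (c1 * real m) \<le> real (card G) * (c1 * real m)"
      using 2 \<open>c1 > 0\<close> by (intro mult_right_mono) auto
    then have "N / 4 * (c1 * real m) \<le> S / (c1 * real n / 4)"
      using zer_lower zer_upper by linarith
    then have "c1\<^sup>2 / 16 * real n * real m * N \<le> S"
      using \<open>c1 > 0\<close> \<open>n \<ge> 1\<close> by (simp add: field_simps power2_eq_square)
    moreover have "min (c2 / 2) (c1\<^sup>2 / 16) * real n * real m * N \<le> c1\<^sup>2 / 16 * real n * real m * N"
      by (intro mult_right_mono) (auto simp: N_def)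
    ultimately show ?thesis
      by linarith
  qed
  then show ?thesis
    by (simp add: N_def S_def L_def len_def)
qed

lemma sum_exp_queries_ge:
  assumes "finite L"
    and "\<And>T. T \<in> set_pmf A \<Longrightarrow> a \<le> (\<Sum>l\<in>L. real (length (qpath T (x l))))"
  shows "ennreal a \<le> (\<Sum>l\<in>L. exp_queries A (x l))"
proof -
  have "ennreal a = (\<integral>\<^sup>+ T. ennreal a \<partial>measure_pmf A)"
    by (simp add: measure_pmf.emeasure_space_1)
  also have "\<dots> \<le> (\<integral>\<^sup>+ T. ennreal (\<Sum>l\<in>L. real (length (qpath T (x l)))) \<partial>measure_pmf A)"
    by (rule nn_integral_mono_AE) (auto simp: AE_measure_pmf_iff intro!: ennreal_leI assms(2))
  also have "\<dots> = (\<integral>\<^sup>+ T. (\<Sum>l\<in>L. ennreal (real (length (qpath T (x l))))) \<partial>measure_pmf A)"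
    by (simp add: sum_ennreal)
  also have "\<dots> = (\<Sum>l\<in>L. exp_queries A (x l))"
    unfolding exp_queries_def by (rule nn_integral_sum) auto
  finally show ?thesis .
qed

lemma exists_ge_average_ennreal:
  fixes f :: "'a \<Rightarrow> ennreal"
  assumes "finite L" "L \<noteq> {}" "of_nat (card L) * a \<le> (\<Sum>l\<in>L. f l)"
  shows "\<exists>l\<in>L. a \<le> f l"
proof -
  have "Max (f ` L) \<in> f ` L"
    using assms(1,2) by (intro Max_in) auto
  then obtain l where "l \<in> L" and l_max: "Max (f ` L) = f l"
    by blast
  have "of_nat (card L) * a \<le> of_nat (card L) * f l"
    using assms(1) Max_ge[of "f ` L"] by (intro order_trans[OF assms(3) sum_bounded_above]) (simp add: l_max)
  then have "a \<le> f l"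
    using assms(1,2) by (simp add: ennreal_mult_le_mult_iff)
  with \<open>l \<in> L\<close> show ?thesis ..
qed

theorem lemma10:
  fixes c1 c2 :: real
  assumes "c1 > 0" and "c2 > 0"
  shows "\<exists>c > 0. \<forall>(n::nat) (m::nat) (A :: (cell, 'p sym, 'o) dtree pmf).
           n \<ge> 1 \<longrightarrow> m \<ge> 1 \<longrightarrow>
           (\<forall>T \<in> set_pmf A. \<forall>l \<in> {..<m} \<rightarrow>\<^sub>E {..<n}.
              set (qpath T (mu_input n m l)) \<subseteq> {..<n} \<times> {..<m} \<and>
              (real (zeros_found T (mu_input n m l)) \<ge> c1 * real m \<or>
               real (card (set (qpath T (mu_input n m l)))) \<ge> c2 * real n * real m)) \<longrightarrow>
           (\<exists>l \<in> {..<m} \<rightarrow>\<^sub>E {..<n}.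
              exp_queries A (mu_input n m l) \<ge> ennreal (c * real n * real m))"
proof (intro exI[of _ "min (c2 / 2) (c1\<^sup>2 / 16)"] conjI allI impI)
  let ?c = "min (c2 / 2) (c1\<^sup>2 / 16)"
  show "?c > 0"
    using assms by simp
  fix n m :: nat and A :: "(cell, 'p sym, 'o) dtree pmf"
  let ?L = "{..<m} \<rightarrow>\<^sub>E {..<n}"
  assume "n \<ge> 1" "m \<ge> 1" and stops: "\<forall>T \<in> set_pmf A. \<forall>l \<in> ?L.
      set (qpath T (mu_input n m l)) \<subseteq> {..<n} \<times> {..<m} \<and>
      (real (zeros_found T (mu_input n m l)) \<ge> c1 * real m \<or>
       real (card (set (qpath T (mu_input n m l)))) \<ge> c2 * real n * real m)"
  have "finite ?L" "?L \<noteq> {}"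
    using \<open>n \<ge> 1\<close> by (auto simp: finite_PiE PiE_eq_empty_iff lessThan_empty_iff)
  have "ennreal (?c * real n * real m * real (card ?L)) \<le> (\<Sum>l\<in>?L. exp_queries A (mu_input n m l))"
    using assms \<open>n \<ge> 1\<close> stops by (intro sum_exp_queries_ge \<open>finite ?L\<close> sum_length_qpath_ge) auto
  then have "of_nat (card ?L) * ennreal (?c * real n * real m) \<le> (\<Sum>l\<in>?L. exp_queries A (mu_input n m l))"
    using assms by (simp add: ennreal_mult' ennreal_of_nat_eq_real_of_nat mult.commute)
  then show "\<exists>l \<in> ?L. exp_queries A (mu_input n m l) \<ge> ennreal (?c * real n * real m)"
    by (rule exists_ge_average_ennreal[OF \<open>finite ?L\<close> \<open>?L \<noteq> {}\<close>])
qed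

end
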